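(* There exists a unique multiplicative trivialization $\varrho_{\mathrm{can}}=(1_t)_{t\in T^{(A)}}$ of $\mathcal{L}\mathrm{og}$ over $T^{(A)}$. It is compatible with isogenies, and for $t\in T[N]$ with $N$ invertible in $A$, $1_t$ is given by the isomorphism \[ t^*\mathcal{L}\mathrm{og}\cong t^*[N]^*\mathcal{L}\mathrm{og}\cong0^*[N]^*\mathcal{L}\mathrm{og}\cong0^*\mathcal{L}\mathrm{og} \] (sending $1_t$ to $\mathbf{1}$). Here the outer isomorphisms are the pull-backs of $[N]_{\mathcal{L}\mathrm{og}}$, and the middle one comes from $[N]\circ t=[N]\circ0$.
   Context: Let $A$ be a commutative ring and $L$ a free abelian group of rank $n$. Let $R$ be the completion of the group ring $A[L]$ (basis $\delta_\ell$) at its augmentation ideal $J$, and $I=JR$. Let $V=\mathbb{R}\otimes L$, $T=V/L$, $\pi:V\to T$. The logarithm sheaf $\mathcal{L}\mathrm{og}$ is the local system on $T$ whose sections over $U$ are the locally constant $f:\pi^{-1}(U)\to R$ with $f(v+\ell)=\delta_\ell^{-1}f(v)$; its stalk at $0$ is $R$ with generator $\mathbf 1=1$, and $\mathcal{L}\mathrm{og}/I\mathcal{L}\mathrm{og}=\underline A$. Functoriality: for a homomorphism $\varphi:L\to L'$ the induced continuous map $\varphi_R:R(L)\to R(L')$, $\delta_\ell\mapsto\delta_{\varphi(\ell)}$, gives a morphism of local systems $\varphi_{\mathcal{L}\mathrm{og}}:\mathcal{L}\mathrm{og}_T\to\varphi^*\mathcal{L}\mathrm{og}_{T'}$ preserving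 $\mathbf 1$. It is an isomorphism if $\varphi$ is an isogeny (injective with finite cokernel) whose degree $\#(L'/\varphi(L))$ is invertible in $A$. $[N]$ denotes multiplication by $N$ on $L$ and $T$. There is a unique isomorphism $\mathrm{pr}_1^*\mathcal{L}\mathrm{og}\otimes_{\underline R}\mathrm{pr}_2^*\mathcal{L}\mathrm{og}\cong+^*\mathcal{L}\mathrm{og}$ on $T\times T$ sending $\mathbf1\otimes\mathbf1$ to $\mathbf1$. A multiplicative trivialization over a subgroup $H\subset T$ is a family of generators $1_h\in\mathcal{L}\mathrm{og}_h$ ($h\in H$) with $1_h\equiv1\bmod I\mathcal{L}\mathrm{og}_h$ and $1_h\otimes1_{h'}\mapsto1_{h+h'}$ under this isomorphism. $T^{(A)}$ is the subgroup of torsion points of $T$ whose order is invertible in $A$. Compatibility with an isogeny $\varphi$ of degree invertible in $A$ means that $\varphi_{\mathcal{L}\mathrm{og}}$ maps $1_t$ to $1'_{\varphi(t)}$. *)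

theory Defs
  imports "HOL-Analysis.Analysis" "HOL-Library.Poly_Mapping"
begin

type_synonym ('l, 'a) grpring = "'l \<Rightarrow>\<^sub>0 'a"

definition delta :: "'l \<Rightarrow> ('l::ab_group_add, 'a::comm_ring_1) grpring" where
  "delta l = Poly_Mapping.single l 1"

definition aug :: "('l::ab_group_add, 'a::comm_ring_1) grpring \<Rightarrow> 'a" where
  "aug x = (\<Sum>l\<in>Poly_Mapping.keys x. Poly_Mapping.lookup x l)"

definition augJ :: "('l::ab_group_add, 'a::comm_ring_1) grpring set" where
  "augJ = {x. aug x = 0}"

inductive Jmem :: "nat \<Rightarrow> ('l::ab_group_add, 'a::comm_ring_1) grpring \<Rightarrow> bool" where
  Jmem0: "Jmem 0 x"
| JmemZ: "Jmem k 0"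
| JmemM: "a \<in> augJ \<Longrightarrow> Jmem m b \<Longrightarrow> Jmem (Suc m) (a * b)"
| JmemA: "Jmem k x \<Longrightarrow> Jmem k y \<Longrightarrow> Jmem k (x + y)"
| JmemS: "Jmem k x \<Longrightarrow> Jmem k (r * x)"

definition Jpow :: "nat \<Rightarrow> ('l::ab_group_add, 'a::comm_ring_1) grpring set" where
  "Jpow k = {x. Jmem k x}"

text \<open>An element of R is represented by a compatible sequence (s_k) with
s_k in A[L] read modulo J^k and s_(k+1) = s_k mod J^k; two representatives
define the same element of R iff they agree modulo J^k for all k.\<close>

type_synonym ('l, 'a) compl = "nat \<Rightarrow> ('l, 'a) grpring"

definition cvalid :: "('l::ab_group_add, 'a::comm_ring_1) compl \<Rightarrow> bool" where
  "cvalid s \<longleftrightarrow> (\<forall>k. s (Suc k) - s k \<in> Jpow k)"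

definition ceq :: "('l::ab_group_add, 'a::comm_ring_1) compl \<Rightarrow> ('l, 'a) compl \<Rightarrow> bool"
  (infix "\<approx>" 50) where
  "s \<approx> t \<longleftrightarrow> (\<forall>k. s k - t k \<in> Jpow k)"

definition cemb :: "('l::ab_group_add, 'a::comm_ring_1) grpring \<Rightarrow> ('l, 'a) compl" where
  "cemb x = (\<lambda>k. x)"

definition cadd :: "('l::ab_group_add, 'a::comm_ring_1) compl \<Rightarrow> ('l, 'a) compl \<Rightarrow> ('l, 'a) compl" where
  "cadd s t = (\<lambda>k. s k + t k)"

definition cdiff :: "('l::ab_group_add, 'a::comm_ring_1) compl \<Rightarrow> ('l, 'a) compl \<Rightarrow> ('l, 'a) compl" where
  "cdiff s t = (\<lambda>k. s k - t k)"

definition cmul :: "('l::ab_group_add, 'a::comm_ring_1) compl \<Rightarrow> ('l, 'a) compl \<Rightarrow> ('l, 'a) compl" where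
  "cmul s t = (\<lambda>k. s k * t k)"

definition cone :: "('l::ab_group_add, 'a::comm_ring_1) compl" where
  "cone = cemb 1"

definition cunit :: "('l::ab_group_add, 'a::comm_ring_1) compl \<Rightarrow> bool" where
  "cunit s \<longleftrightarrow> (\<exists>u. cvalid u \<and> cmul u s \<approx> cone)"

definition inI :: "('l::ab_group_add, 'a::comm_ring_1) compl \<Rightarrow> bool" where
  "inI s \<longleftrightarrow> (\<exists>js rs. length js = length rs \<and> set js \<subseteq> augJ \<and> (\<forall>r\<in>set rs. cvalid r) \<and>
      s \<approx> (\<lambda>k. \<Sum>i<length js. js ! i * (rs ! i) k))"

definition phiA :: "('l::ab_group_add \<Rightarrow> 'm::ab_group_add) \<Rightarrow> ('l, 'a::comm_ring_1) grpring \<Rightarrow> ('m, 'a) grpring" where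
  "phiA f x = (\<Sum>l\<in>Poly_Mapping.keys x. Poly_Mapping.single (f l) (Poly_Mapping.lookup x l))"

definition phiR :: "('l::ab_group_add \<Rightarrow> 'm::ab_group_add) \<Rightarrow> ('l, 'a::comm_ring_1) compl \<Rightarrow> ('m, 'a) compl" where
  "phiR f s = (\<lambda>k. phiA f (s k))"

section \<open>Lattice L = Z^n, V = R (x) L = R^n, torus T = V/L\<close>

definition ivec :: "int ^ 'n \<Rightarrow> real ^ 'n" where
  "ivec l = (\<chi> i. of_int (l $ i))"

definition inL :: "real ^ 'n \<Rightarrow> bool" where
  "inL v \<longleftrightarrow> (\<exists>l. v = ivec l)"

definition tord :: "real ^ 'n \<Rightarrow> nat" where
  "tord v = (LEAST N. N > 0 \<and> inL (real N *\<^sub>R v))"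

definition unitA :: "'a::comm_ring_1 \<Rightarrow> bool" where
  "unitA x \<longleftrightarrow> (\<exists>y. x * y = 1)"

definition TA :: "'a::comm_ring_1 itself \<Rightarrow> real ^ 'n \<Rightarrow> bool" where
  "TA _ v \<longleftrightarrow> (\<exists>N>0. inL (real N *\<^sub>R v)) \<and> unitA (of_nat (tord v) :: 'a)"

definition phiV :: "(int ^ 'n \<Rightarrow> int ^ 'm) \<Rightarrow> real ^ 'n \<Rightarrow> real ^ 'm" where
  "phiV f v = (\<Sum>i\<in>UNIV. (v $ i) *\<^sub>R ivec (f (axis i 1)))"

text \<open>The stalk of Log at pi(v) is the rank one free R-module of functions f on the
fibre v + L with f(v + l) = delta_l^{-1} f(v).  A family (1_t) of elements of the
stalks over a subset of T is thus encoded by one function g on V (only its values on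
the fibres over that subset matter).  Under the tensor isomorphism,
f (x) f' corresponds to (v + w \<mapsto> f(v) f'(w)); f generates the stalk iff f(v) is a
unit of R; and f = 1 mod I Log iff f(v) - 1 \<in> I.\<close>

definition mult_triv :: "'a::comm_ring_1 itself \<Rightarrow> (real ^ 'n \<Rightarrow> (int ^ 'n, 'a) compl) \<Rightarrow> bool" where
  "mult_triv A g \<longleftrightarrow>
     (\<forall>v. TA A v \<longrightarrow> cvalid (g v) \<and> cunit (g v) \<and> inI (cdiff (g v) cone)) \<and>
     (\<forall>v l. TA A v \<longrightarrow> g (v + ivec l) \<approx> cmul (cemb (delta (- l))) (g v)) \<and>
     (\<forall>v w. TA A v \<longrightarrow> TA A w \<longrightarrow> g (v + w) \<approx> cmul (g v) (g w))"

definition isogeny :: "(int ^ 'n \<Rightarrow> int ^ 'm) \<Rightarrow> bool" where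
  "isogeny f \<longleftrightarrow> (\<forall>x y. f (x + y) = f x + f y) \<and> inj f \<and>
     finite {{x + f y | y. True} | x. True}"

definition isog_deg :: "(int ^ 'n \<Rightarrow> int ^ 'm) \<Rightarrow> nat" where
  "isog_deg f = card {{x + f y | y. True} | x. True}"

end

(* Let t = pi(v) be a torsion point whose order N is invertible in A, and write N v = m in L.
   Multiplicativity and the translation rule give 1_t^N = 1_(Nt) = delta_(-m) 1_0, and 1_0 = 1
   because it is an idempotent unit; so 1_t, read at v, is an N-th root of delta_(-m) in R that is
   congruent to 1 modulo I.  Such principal roots are unique, since x^N - y^N = (x - y) S with
   S congruent to the unit N modulo J, and they exist by a J-adically convergent Newton iteration.
   Uniqueness of principal roots then gives everything: the canonical roots are multiplicative, any
   two trivializations agree, and phi_R, a ring map, sends principal roots to principal roots, which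
   yields compatibility with isogenies and, for phi = [N], the description via [N]. *)

theory Submission
  imports Defs
begin

section \<open>Powers of the augmentation ideal\<close>

lemma zero_in_Jpow [simp]: "0 \<in> Jpow k"
  by (simp add: Jpow_def JmemZ)

lemma in_Jpow_0 [simp]: "x \<in> Jpow 0"
  by (simp add: Jpow_def Jmem0)

lemma Jpow_add: "x \<in> Jpow k \<Longrightarrow> y \<in> Jpow k \<Longrightarrow> x + y \<in> Jpow k"
  by (simp add: Jpow_def JmemA)

lemma Jpow_mult_left: "x \<in> Jpow k \<Longrightarrow> r * x \<in> Jpow k"
  by (simp add: Jpow_def JmemS)

lemma Jpow_mult_right: "x \<in> Jpow k \<Longrightarrow> x * r \<in> Jpow k"
  by (metis Jpow_mult_left mult.commute)

lemma Jpow_uminus: "x \<in> Jpow k \<Longrightarrow> - x \<in> Jpow k"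
  using Jpow_mult_left[of x k "- 1"] by simp

lemma Jpow_diff: "x \<in> Jpow k \<Longrightarrow> y \<in> Jpow k \<Longrightarrow> x - y \<in> Jpow k"
  using Jpow_add[of x k "- y"] by (simp add: Jpow_uminus)

lemma Jpow_sum: "(\<And>i. i \<in> S \<Longrightarrow> f i \<in> Jpow k) \<Longrightarrow> sum f S \<in> Jpow k"
  by (induction S rule: infinite_finite_induct) (auto intro: Jpow_add)

lemma Jmem_Suc_imp_Jmem: "Jmem (Suc m) x \<Longrightarrow> Jmem m x"
proof (induction "Suc m" x arbitrary: m rule: Jmem.induct)
  case (JmemM a m b)
  then show ?case by (simp add: JmemS)
qed (auto intro: Jmem.intros)

lemma Jpow_antimono: "m \<le> k \<Longrightarrow> x \<in> Jpow k \<Longrightarrow> x \<in> Jpow m"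
  by (induction k rule: dec_induct) (auto simp: Jpow_def Jmem_Suc_imp_Jmem)

lemma Jmem_mult: "Jmem a x \<Longrightarrow> Jmem b y \<Longrightarrow> Jmem (a + b) (x * y)"
proof (induction rule: Jmem.induct)
  case (JmemM a m b')
  then have "Jmem (Suc (m + b)) (a * (b' * y))"
    by (simp add: Jmem.JmemM)
  then show ?case
    by (simp add: mult.assoc)
qed (auto simp: distrib_right mult.assoc intro: Jmem.intros)

lemma Jpow_mult: "x \<in> Jpow a \<Longrightarrow> y \<in> Jpow b \<Longrightarrow> x * y \<in> Jpow (a + b)"
  by (simp add: Jpow_def Jmem_mult)

lemma augJ_in_Jpow_1: "x \<in> augJ \<Longrightarrow> x \<in> Jpow 1"
  using JmemM[OF _ Jmem0, of x 1] by (simp add: Jpow_def)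

lemma augJ_mult_Jpow: "x \<in> augJ \<Longrightarrow> y \<in> Jpow m \<Longrightarrow> x * y \<in> Jpow (Suc m)"
  using Jpow_mult[OF augJ_in_Jpow_1] by fastforce

lemma Jpow_power_diff: "x - y \<in> Jpow k \<Longrightarrow> x ^ n - y ^ n \<in> Jpow k"
  by (simp add: power_diff_sumr2 Jpow_mult_right)

lemma Jpow_1_power: "x - 1 \<in> Jpow 1 \<Longrightarrow> x ^ n - 1 \<in> Jpow 1"
  using Jpow_power_diff[of x 1 1 n] by simp

lemma poly_mapping_sum_singles:
  fixes x :: "'k \<Rightarrow>\<^sub>0 'b::comm_monoid_add"
  assumes "finite S" "Poly_Mapping.keys x \<subseteq> S"
  shows "x = (\<Sum>k\<in>S. Poly_Mapping.single k (Poly_Mapping.lookup x k))"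
proof (rule poly_mapping_eqI)
  fix j
  have "Poly_Mapping.lookup x j = (\<Sum>k\<in>S. (Poly_Mapping.lookup x k when k = j))"
    using assms by (cases "j \<in> S") (auto simp: when_def in_keys_iff)
  then show "Poly_Mapping.lookup x j
      = Poly_Mapping.lookup (\<Sum>k\<in>S. Poly_Mapping.single k (Poly_Mapping.lookup x k)) j"
    by (simp add: lookup_sum lookup_single)
qed

lemma poly_mapping_induct [case_names single add]:
  fixes x :: "'k \<Rightarrow>\<^sub>0 'b::comm_monoid_add"
  assumes single: "\<And>k a. P (Poly_Mapping.single k a)"
    and add: "\<And>a b. P a \<Longrightarrow> P b \<Longrightarrow> P (a + b)"
  shows "P x"
proof -
  have "P (\<Sum>k\<in>S. Poly_Mapping.single k (Poly_Mapping.lookup x k))" if "finite S" for S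
    using that single[of undefined 0] by (induction S rule: finite_induct) (auto intro: single add)
  then show ?thesis
    using poly_mapping_sum_singles[of "Poly_Mapping.keys x" x] by (metis finite_keys order_refl)
qed

lemma phiA_eq_sum:
  assumes "finite S" "Poly_Mapping.keys x \<subseteq> S"
  shows "phiA f x = (\<Sum>l\<in>S. Poly_Mapping.single (f l) (Poly_Mapping.lookup x l))"
  unfolding phiA_def using assms by (intro sum.mono_neutral_left) (auto simp: in_keys_iff)

lemma aug_eq_sum:
  assumes "finite S" "Poly_Mapping.keys x \<subseteq> S"
  shows "aug x = (\<Sum>l\<in>S. Poly_Mapping.lookup x l)"
  unfolding aug_def using assms by (intro sum.mono_neutral_left) (auto simp: in_keys_iff)

lemma additive_phiA:
  "Modules.additive (phiA f :: ('l::ab_group_add, 'a::comm_ring_1) grpring \<Rightarrow> ('m::ab_group_add, 'a) grpring)"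
proof
  fix x y :: "('l, 'a) grpring"
  let ?S = "Poly_Mapping.keys x \<union> Poly_Mapping.keys y"
  have "finite ?S" "Poly_Mapping.keys (x + y) \<subseteq> ?S"
    by (auto simp: keys_add)
  then show "phiA f (x + y) = phiA f x + phiA f y"
    by (simp add: phiA_eq_sum[of ?S] lookup_add single_add sum.distrib)
qed

lemma additive_aug: "Modules.additive (aug :: ('l::ab_group_add, 'a::comm_ring_1) grpring \<Rightarrow> 'a)"
proof
  fix x y :: "('l, 'a) grpring"
  let ?S = "Poly_Mapping.keys x \<union> Poly_Mapping.keys y"
  have "finite ?S" "Poly_Mapping.keys (x + y) \<subseteq> ?S"
    by (auto simp: keys_add)
  then show "aug (x + y) = aug x + aug y"
    by (simp add: aug_eq_sum[of ?S] lookup_add sum.distrib)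
qed

lemma phiA_single [simp]: "phiA f (Poly_Mapping.single k a) = Poly_Mapping.single (f k) a"
  by (subst phiA_eq_sum[of "{k}"]) auto

lemma aug_single [simp]: "aug (Poly_Mapping.single k a) = a"
  by (subst aug_eq_sum[of "{k}"]) auto

lemma aug_phiA [simp]: "aug (phiA f x) = aug x"
  by (induction x rule: poly_mapping_induct)
    (simp_all add: additive.add[OF additive_phiA] additive.add[OF additive_aug])

lemma phiA_mult:
  assumes "Modules.additive f"
  shows "phiA f (x * y) = phiA f x * phiA f y"
proof (induction x rule: poly_mapping_induct)
  case (single k a)
  show ?case
    by (induction y rule: poly_mapping_induct)
      (simp_all add: mult_single additive.add[OF assms] distrib_left additive.add[OF additive_phiA])
next
  case (add a b)
  then show ?case
    by (simp add: distrib_right additive.add[OF additive_phiA])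
qed

lemma phiA_one: "Modules.additive f \<Longrightarrow> phiA f 1 = 1"
  by (metis additive.zero phiA_single single_one)

lemma phiA_power: "Modules.additive f \<Longrightarrow> phiA f (x ^ n) = phiA f x ^ n"
  by (induction n) (simp_all add: phiA_one phiA_mult)

lemma phiA_Jpow:
  assumes "Modules.additive f" "x \<in> Jpow k"
  shows "phiA f x \<in> Jpow k"
proof -
  have "Jmem k (phiA f x)" if "Jmem k x" for x
    using that
  proof (induction rule: Jmem.induct)
    case (JmemM a m b)
    then show ?case
      by (simp add: phiA_mult[OF assms(1)] Jmem.JmemM augJ_def)
  qed (simp_all add: additive.add[OF additive_phiA] additive.zero[OF additive_phiA]
      phiA_mult[OF assms(1)] Jmem.intros)
  then show ?thesis
    using assms(2) by (simp add: Jpow_def)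
qed

lemma phiA_delta [simp]: "phiA f (delta a) = delta (f a)"
  by (simp add: delta_def)

lemma delta_mult: "delta a * delta b = delta (a + b)"
  by (simp add: delta_def mult_single)

lemma delta_0 [simp]: "delta 0 = 1"
  by (simp add: delta_def)

lemma delta_power: "delta (a :: 'l::comm_ring_1) ^ n = delta (of_nat n * a)"
  by (induction n) (simp_all add: delta_mult distrib_right)

lemma delta_minus_1_in_augJ: "delta a - 1 \<in> augJ"
  by (simp add: augJ_def additive.diff[OF additive_aug] delta_def flip: single_one)

section \<open>Principal roots in the completion\<close>

lemma ceq_refl [simp]: "ceq s s"
  by (simp add: ceq_def)

lemma ceq_sym: "ceq s t \<Longrightarrow> ceq t s"
  unfolding ceq_def by (metis Jpow_uminus minus_diff_eq)

lemma ceq_trans [trans]: "ceq s t \<Longrightarrow> ceq t u \<Longrightarrow> ceq s u"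
  unfolding ceq_def
proof
  fix k
  assume "\<forall>k. s k - t k \<in> Jpow k" "\<forall>k. t k - u k \<in> Jpow k"
  then have "(s k - t k) + (t k - u k) \<in> Jpow k"
    by (blast intro: Jpow_add)
  then show "s k - u k \<in> Jpow k"
    by simp
qed

lemma ceq_cmul: "ceq s s' \<Longrightarrow> ceq t t' \<Longrightarrow> ceq (cmul s t) (cmul s' t')"
  unfolding ceq_def cmul_def
proof
  fix k
  assume "\<forall>k. s k - s' k \<in> Jpow k" "\<forall>k. t k - t' k \<in> Jpow k"
  then have "s k * (t k - t' k) + (s k - s' k) * t' k \<in> Jpow k"
    by (blast intro: Jpow_add Jpow_mult_left Jpow_mult_right)
  then show "s k * t k - s' k * t' k \<in> Jpow k"
    by (simp add: algebra_simps)
qed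

lemma unit_of_nat_grpring:
  assumes "unitA (of_nat N :: 'c::comm_ring_1)"
  obtains u :: "('l::ab_group_add, 'c::comm_ring_1) grpring" where "u * of_nat N = 1"
proof -
  obtain y :: 'c where "of_nat N * y = 1"
    using assms by (auto simp: unitA_def)
  then have "Poly_Mapping.single 0 y * of_nat N = (1 :: ('l, 'c) grpring)"
    by (metis single_of_nat mult_single add_0 mult.commute single_one)
  then show thesis
    by (rule that)
qed

lemma sum_powers_minus_of_nat_in_Jpow_1:
  assumes "x - 1 \<in> Jpow 1" "y - 1 \<in> Jpow 1"
  shows "(\<Sum>i<M. y ^ (M - Suc i) * x ^ i) - of_nat M \<in> Jpow 1"
proof -
  have "y ^ (M - Suc i) * (x ^ i - 1) + (y ^ (M - Suc i) - 1) \<in> Jpow 1" for i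
    using assms by (intro Jpow_add Jpow_mult_left Jpow_1_power)
  then have "(\<Sum>i<M. y ^ (M - Suc i) * x ^ i - 1) \<in> Jpow 1"
    by (intro Jpow_sum) (simp add: algebra_simps)
  then show ?thesis
    by (simp add: sum_subtractf)
qed

text \<open>Since \<open>x\<^sup>M - y\<^sup>M = (x - y) S\<close> with \<open>S \<equiv> M\<close> modulo \<open>J\<close>, and \<open>M\<close> is
  invertible, \<open>x - y \<in> J\<^sup>m\<close> implies \<open>x - y \<in> J\<^sup>m\<^sup>+\<^sup>1\<close> as long as \<open>m < k\<close>.\<close>
lemma Jpow_diff_of_power_diff:
  fixes x y u :: "('l::ab_group_add, 'c::comm_ring_1) grpring"
  assumes u: "u * of_nat M = 1"
    and x: "x - 1 \<in> Jpow 1" and y: "y - 1 \<in> Jpow 1"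
    and xy: "x ^ M - y ^ M \<in> Jpow k"
  shows "x - y \<in> Jpow k"
proof -
  define S where "S = (\<Sum>i<M. y ^ (M - Suc i) * x ^ i)"
  have S: "x ^ M - y ^ M = (x - y) * S"
    unfolding S_def by (rule power_diff_sumr2)
  have S_M: "S - of_nat M \<in> Jpow 1"
    unfolding S_def using x y by (rule sum_powers_minus_of_nat_in_Jpow_1)
  have "x - y \<in> Jpow m" if "m \<le> k" for m
    using that
  proof (induction m)
    case (Suc m)
    have "(x - y) * S \<in> Jpow (Suc m)"
      using xy S Suc.prems Jpow_antimono by metis
    moreover have "(x - y) * (S - of_nat M) \<in> Jpow (Suc m)"
      using Jpow_mult[OF Suc.IH S_M] Suc.prems by simp
    ultimately have "(x - y) * S - (x - y) * (S - of_nat M) \<in> Jpow (Suc m)"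
      by (rule Jpow_diff)
    then have "(x - y) * of_nat M \<in> Jpow (Suc m)"
      by (simp add: right_diff_distrib)
    then have "u * ((x - y) * of_nat M) \<in> Jpow (Suc m)"
      by (rule Jpow_mult_left)
    then show ?case
      by (metis mult.assoc mult.commute mult_1 u)
  qed simp
  then show ?thesis
    by simp
qed

text \<open>\<open>x\<^sup>M = c\<close> in \<open>R\<close> and \<open>x \<equiv> 1\<close> modulo \<open>I\<close>; the level \<open>k = 0\<close> is excluded from the
  second condition because the level-0 entry of a representative is arbitrary.\<close>
definition principal_root :: "nat \<Rightarrow> ('l::ab_group_add, 'c::comm_ring_1) grpring \<Rightarrow> ('l, 'c) compl \<Rightarrow> bool"
  where "principal_root M c x \<longleftrightarrow> (\<forall>k. x k ^ M - c \<in> Jpow k) \<and> (\<forall>k>0. x k - 1 \<in> Jpow 1)"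

lemma principal_root_unique:
  assumes M: "unitA (of_nat M :: 'c::comm_ring_1)"
    and x: "principal_root M c x" and y: "principal_root M c (y :: ('l::ab_group_add, 'c) compl)"
  shows "ceq x y"
proof -
  obtain u :: "('l, 'c) grpring" where u: "u * of_nat M = 1"
    using unit_of_nat_grpring[OF M] .
  have "x k - y k \<in> Jpow k" if "k > 0" for k
  proof (rule Jpow_diff_of_power_diff[OF u])
    show "x k ^ M - y k ^ M \<in> Jpow k"
      using x y Jpow_diff[of "x k ^ M - c" k "y k ^ M - c"] by (simp add: principal_root_def)
  qed (use x y that in \<open>auto simp: principal_root_def\<close>)
  then show ?thesis
    unfolding ceq_def by (metis in_Jpow_0 neq0_conv)
qed

lemma principal_root_power: "principal_root M c x \<Longrightarrow> principal_root (M * q) (c ^ q) x"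
  unfolding principal_root_def by (simp add: power_mult Jpow_power_diff)

lemma principal_root_cmul:
  assumes "principal_root M c x" "principal_root M d y"
  shows "principal_root M (c * d) (cmul x y)"
  unfolding principal_root_def cmul_def
proof (intro conjI allI impI)
  fix k
  have "x k ^ M * (y k ^ M - d) + d * (x k ^ M - c) \<in> Jpow k"
    using assms unfolding principal_root_def by (blast intro: Jpow_add Jpow_mult_left)
  then show "(x k * y k) ^ M - c * d \<in> Jpow k"
    by (simp add: power_mult_distrib algebra_simps)
next
  fix k :: nat
  assume "k > 0"
  then have "x k * (y k - 1) + (x k - 1) \<in> Jpow 1"
    using assms unfolding principal_root_def by (blast intro: Jpow_add Jpow_mult_left)
  then show "x k * y k - 1 \<in> Jpow 1"
    by (simp add: algebra_simps)
qed

lemma principal_root_delta: "principal_root M (delta a ^ M) (cemb (delta a))"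
  using augJ_in_Jpow_1[OF delta_minus_1_in_augJ] by (auto simp: principal_root_def cemb_def)

lemma principal_root_phiR:
  assumes f: "Modules.additive f" and x: "principal_root M c x"
  shows "principal_root M (phiA f c) (phiR f x)"
proof -
  have "phiA f (x k) ^ M - phiA f c = phiA f (x k ^ M - c)" for k
    by (simp add: phiA_power[OF f] additive.diff[OF additive_phiA])
  moreover have "phiA f (x k) - 1 = phiA f (x k - 1)" for k
    by (simp add: phiA_one[OF f] additive.diff[OF additive_phiA])
  ultimately show ?thesis
    using x by (simp add: principal_root_def phiR_def phiA_Jpow[OF f])
qed

lemma cunit_if_principal_root:
  assumes x: "principal_root M c x" "cvalid x" and c: "c * d = 1" and M: "M > 0"
  shows "cunit x"
  unfolding cunit_def
proof (intro exI conjI)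
  show "cvalid (\<lambda>k. x k ^ (M - 1) * d)"
    unfolding cvalid_def
  proof
    fix k
    have "x (Suc k) ^ (M - 1) - x k ^ (M - 1) \<in> Jpow k"
      using x(2) by (simp add: cvalid_def Jpow_power_diff)
    then show "x (Suc k) ^ (M - 1) * d - x k ^ (M - 1) * d \<in> Jpow k"
      by (metis Jpow_mult_right left_diff_distrib)
  qed
  have "x k ^ (M - 1) * d * x k - 1 = (x k ^ M - c) * d" for k
  proof -
    have "x k ^ (M - 1) * x k = x k ^ M"
      using M by (simp add: power_Suc2[symmetric])
    then show ?thesis
      using c by (simp add: algebra_simps)
  qed
  moreover have "(x k ^ M - c) * d \<in> Jpow k" for k
    using x(1) by (simp add: principal_root_def Jpow_mult_right)
  ultimately show "ceq (cmul (\<lambda>k. x k ^ (M - 1) * d) x) cone"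
    unfolding ceq_def cmul_def cone_def cemb_def by metis
qed

text \<open>Newton's iteration \<open>x \<mapsto> x - u (x\<^sup>N - (1 + t))\<close> with \<open>u = 1/N\<close>, started at \<open>x = 1\<close> and
  written as \<open>x = 1 + t r\<close>; the second component \<open>q\<close> is the error \<open>x\<^sup>N - (1 + t)\<close> divided
  by \<open>t\<close>. Keeping the factor \<open>t\<close> explicit is what places the limit in \<open>1 + I\<close>.\<close>
primrec newton_root :: "'b::comm_ring_1 \<Rightarrow> 'b \<Rightarrow> nat \<Rightarrow> nat \<Rightarrow> 'b \<times> 'b" where
  "newton_root t u N 0 = (0, - 1)"
| "newton_root t u N (Suc k) =
     (let (r, q) = newton_root t u N k; r' = r - u * q
      in (r', - u * q * ((\<Sum>i<N. (1 + t * r) ^ (N - Suc i) * (1 + t * r') ^ i) - of_nat N)))"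

lemma newton_root_error:
  fixes t u :: "('l::ab_group_add, 'c::comm_ring_1) grpring"
  assumes t: "t \<in> augJ" and u: "u * of_nat N = 1"
  shows "(1 + t * fst (newton_root t u N k)) ^ N - (1 + t) = t * snd (newton_root t u N k)
    \<and> snd (newton_root t u N k) \<in> Jpow k"
proof (induction k)
  case (Suc k)
  obtain r q where rq: "newton_root t u N k = (r, q)"
    by fastforce
  define r' where "r' = r - u * q"
  define S where "S = (\<Sum>i<N. (1 + t * r) ^ (N - Suc i) * (1 + t * r') ^ i)"
  have step: "newton_root t u N (Suc k) = (r', - u * q * (S - of_nat N))"
    by (simp add: rq r'_def S_def Let_def)
  have IH: "(1 + t * r) ^ N - (1 + t) = t * q" "q \<in> Jpow k"
    using Suc rq by simp_all
  have "(1 + t * r') ^ N - (1 + t * r) ^ N = (t * r' - t * r) * S"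
    unfolding S_def using power_diff_sumr2[of "1 + t * r'" N "1 + t * r"] by simp
  then have "(1 + t * r') ^ N - (1 + t) = t * q * (u * of_nat N) - t * u * q * S"
    using IH(1) u by (simp add: r'_def algebra_simps)
  then have "(1 + t * r') ^ N - (1 + t) = t * (- u * q * (S - of_nat N))"
    by (simp add: algebra_simps)
  moreover have "S - of_nat N \<in> Jpow 1"
    unfolding S_def using augJ_mult_Jpow[OF t, of _ 0]
    by (intro sum_powers_minus_of_nat_in_Jpow_1) simp_all
  then have "- u * q * (S - of_nat N) \<in> Jpow (k + 1)"
    by (intro Jpow_mult Jpow_mult_left IH(2))
  ultimately show ?case
    unfolding step by simp
qed simp

lemma newton_root_converges:
  fixes t u :: "('l::ab_group_add, 'c::comm_ring_1) grpring"
  assumes t: "t \<in> augJ" and u: "u * of_nat N = 1"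
  defines "x \<equiv> \<lambda>k. 1 + t * fst (newton_root t u N k)"
  shows "principal_root N (1 + t) x" "cvalid x" "inI (cdiff x cone)"
proof -
  define r where "r k = fst (newton_root t u N k)" for k
  define q where "q k = snd (newton_root t u N k)" for k
  have err: "x k ^ N - (1 + t) = t * q k" "q k \<in> Jpow k" for k
    using newton_root_error[OF t u] by (simp_all add: x_def q_def)
  have "r (Suc k) - r k = - u * q k" for k
    by (simp add: r_def q_def Let_def split: prod.split)
  then have r: "cvalid r"
    unfolding cvalid_def using err(2) by (simp add: Jpow_mult_left Jpow_uminus)
  have "t * q k \<in> Jpow k" "t * r k \<in> Jpow 1" for k
    using Jpow_antimono[OF le_SucI[OF order_refl] augJ_mult_Jpow[OF t err(2)]]
      augJ_mult_Jpow[OF t in_Jpow_0] by simp_all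
  then show "principal_root N (1 + t) x"
    unfolding principal_root_def by (simp add: err(1)) (simp add: x_def r_def)
  show "cvalid x"
    using r unfolding cvalid_def by (simp add: x_def r_def[symmetric] Jpow_mult_left flip: right_diff_distrib)
  show "inI (cdiff x cone)"
    unfolding inI_def
  proof (intro exI conjI)
    show "ceq (cdiff x cone) (\<lambda>k. \<Sum>i<length [t]. [t] ! i * ([r] ! i) k)"
      by (simp add: x_def r_def cdiff_def cone_def cemb_def)
  qed (use t r in auto)
qed

definition delta_root :: "nat \<Rightarrow> 'l::ab_group_add \<Rightarrow> ('l, 'c::comm_ring_1) compl" where
  "delta_root N l = (let t = delta (- l) - 1; u = (SOME u. u * of_nat N = 1)
     in (\<lambda>k. 1 + t * fst (newton_root t u N k)))"

lemma delta_root: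
  fixes l :: "'l::ab_group_add"
  assumes N: "unitA (of_nat N :: 'c::comm_ring_1)" "N > 0"
  defines "x \<equiv> delta_root N l :: ('l, 'c) compl"
  shows "principal_root N (delta (- l)) x" "cvalid x" "cunit x" "inI (cdiff x cone)"
proof -
  define u :: "('l, 'c) grpring" where "u = (SOME u. u * of_nat N = 1)"
  have u: "u * of_nat N = 1"
    unfolding u_def by (rule someI_ex) (use unit_of_nat_grpring[OF N(1)] in blast)
  note newton = newton_root_converges[OF delta_minus_1_in_augJ u, of "- l"]
  show root: "principal_root N (delta (- l)) x" and valid: "cvalid x" and "inI (cdiff x cone)"
    using newton by (simp_all add: x_def delta_root_def u_def Let_def)
  show "cunit x"
    using cunit_if_principal_root[OF root valid _ N(2), of "delta l"] by (simp add: delta_mult)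
qed

section \<open>Torsion points of the torus\<close>

lemma additive_ivec: "Modules.additive (ivec :: int ^ 'n \<Rightarrow> real ^ 'n)"
  by standard (simp add: ivec_def vec_eq_iff)

lemma ivec_inj: "ivec a = ivec b \<Longrightarrow> a = b"
  by (simp add: ivec_def vec_eq_iff)

lemma ivec_of_nat_mult: "ivec (of_nat q * l) = real q *\<^sub>R ivec l"
  by (simp add: ivec_def vec_eq_iff of_nat_index)

lemma ivec_smult: "ivec (c *s l) = real_of_int c *\<^sub>R ivec l"
  by (simp add: ivec_def vec_eq_iff)

lemma tord:
  assumes "M > 0" "inL (real M *\<^sub>R v)"
  shows "tord v > 0" "inL (real (tord v) *\<^sub>R v)" "tord v dvd M"
proof -
  have least: "tord v > 0 \<and> inL (real (tord v) *\<^sub>R v)"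
    unfolding tord_def by (rule LeastI[of _ M]) (use assms in blast)
  then show "tord v > 0" "inL (real (tord v) *\<^sub>R v)"
    by simp_all
  have "real M = real (M mod tord v) + real (M div tord v) * real (tord v)"
    by (simp flip: of_nat_mult of_nat_add)
  then have "real M *\<^sub>R v = real (M mod tord v) *\<^sub>R v + real (M div tord v) *\<^sub>R (real (tord v) *\<^sub>R v)"
    by (simp add: scaleR_add_left)
  then have "real (M mod tord v) *\<^sub>R v = real M *\<^sub>R v - real (M div tord v) *\<^sub>R (real (tord v) *\<^sub>R v)"
    by (simp add: eq_diff_eq)
  moreover obtain a b where "real M *\<^sub>R v = ivec a" "real (tord v) *\<^sub>R v = ivec b"
    using assms(2) least by (auto simp: inL_def)
  ultimately have "real (M mod tord v) *\<^sub>R v = ivec (a - of_nat (M div tord v) * b)"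
    by (simp add: additive.diff[OF additive_ivec] ivec_of_nat_mult)
  then have "inL (real (M mod tord v) *\<^sub>R v)"
    by (auto simp: inL_def)
  moreover have "M mod tord v < tord v"
    using least by simp
  ultimately have "M mod tord v = 0"
    using not_less_Least[of "M mod tord v" "\<lambda>N. N > 0 \<and> inL (real N *\<^sub>R v)"]
    unfolding tord_def by auto
  then show "tord v dvd M"
    by (simp add: dvd_eq_mod_eq_0)
qed

lemma unitA_dvd:
  assumes "unitA (of_nat M :: 'c::comm_ring_1)" "d dvd M"
  shows "unitA (of_nat d :: 'c)"
proof -
  obtain q where "M = d * q"
    using assms(2) by blast
  moreover obtain y :: 'c where "of_nat M * y = 1"
    using assms(1) by (auto simp: unitA_def)
  ultimately have "of_nat d * (of_nat q * y) = (1 :: 'c)"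
    by (simp add: mult.assoc)
  then show ?thesis
    by (auto simp: unitA_def)
qed

lemma unitA_mult:
  "unitA (of_nat a :: 'c::comm_ring_1) \<Longrightarrow> unitA (of_nat b :: 'c) \<Longrightarrow> unitA (of_nat (a * b) :: 'c)"
  unfolding unitA_def by (metis mult.assoc mult.left_commute mult_1_right of_nat_mult)

lemma TA_intro:
  assumes "M > 0" "real M *\<^sub>R v = ivec m" "unitA (of_nat M :: 'c::comm_ring_1)"
  shows "TA (A :: 'c itself) v"
  using assms tord[of M v] unitA_dvd[OF assms(3)] by (auto simp: TA_def inL_def)

lemma TA_zero: "TA (A :: 'c::comm_ring_1 itself) 0"
  by (rule TA_intro[of 1 _ 0]) (auto simp: unitA_def additive.zero[OF additive_ivec])

definition ord_point :: "real ^ 'n \<Rightarrow> int ^ 'n" where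
  "ord_point v = (THE l. ivec l = real (tord v) *\<^sub>R v)"

lemma TA_D:
  assumes "TA (A :: 'c::comm_ring_1 itself) v"
  shows "tord v > 0" "unitA (of_nat (tord v) :: 'c)" "real (tord v) *\<^sub>R v = ivec (ord_point v)"
proof -
  show "tord v > 0" "unitA (of_nat (tord v) :: 'c)"
    using assms tord by (auto simp: TA_def)
  have "inL (real (tord v) *\<^sub>R v)"
    using assms tord(2) by (auto simp: TA_def)
  then obtain l where l: "ivec l = real (tord v) *\<^sub>R v"
    by (auto simp: inL_def)
  then have "ord_point v = l"
    unfolding ord_point_def by (intro the_equality) (auto intro: ivec_inj)
  then show "real (tord v) *\<^sub>R v = ivec (ord_point v)"
    using l by simp
qed

lemma TA_scaleR:
  assumes "TA (A :: 'c::comm_ring_1 itself) v"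
  shows "TA A (real j *\<^sub>R v)"
proof (rule TA_intro)
  have "real (tord v) *\<^sub>R real j *\<^sub>R v = real j *\<^sub>R (real (tord v) *\<^sub>R v)"
    by (simp add: mult.commute)
  then show "real (tord v) *\<^sub>R real j *\<^sub>R v = ivec (of_nat j * ord_point v)"
    using TA_D(3)[OF assms] by (simp add: ivec_of_nat_mult)
qed (use TA_D[OF assms] in auto)

lemma additive_smult:
  fixes f :: "int ^ 'n \<Rightarrow> int ^ 'm"
  assumes f: "Modules.additive f"
  shows "f (c *s x) = c *s f x"
proof (induction c rule: int_induct[where k = 0])
  case base
  then show ?case
    by (simp add: additive.zero[OF f])
next
  case (step1 i)
  then show ?case
    by (simp add: vector_sadd_rdistrib additive.add[OF f])
next
  case (step2 i)
  then show ?case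
    by (simp add: vector_sub_rdistrib additive.diff[OF f])
qed

lemma phiV_ivec:
  assumes f: "Modules.additive f"
  shows "phiV f (ivec l) = ivec (f l)"
proof -
  have "f l = (\<Sum>i\<in>UNIV. (l $ i) *s f (axis i 1))"
    by (subst basis_expansion[symmetric, of l])
      (simp add: additive.sum[OF f] additive_smult[OF f])
  then show ?thesis
    by (simp add: phiV_def additive.sum[OF additive_ivec] ivec_smult) (simp add: ivec_def)
qed

lemma phiV_scaleR: "phiV f (c *\<^sub>R v) = c *\<^sub>R phiV f v"
  by (simp add: phiV_def scaleR_sum_right)

section \<open>Multiplicative trivializations\<close>

lemma inI_imp_Jpow_1:
  assumes "inI s" "k > 0"
  shows "s k \<in> Jpow 1"
proof -
  obtain js rs where js: "set js \<subseteq> augJ" and s: "ceq s (\<lambda>k. \<Sum>i<length js. js ! i * (rs ! i) k)"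
    using assms(1) unfolding inI_def by blast
  have "s k - (\<Sum>i<length js. js ! i * (rs ! i) k) \<in> Jpow 1"
    using s assms(2) Jpow_antimono[of 1 k] unfolding ceq_def by auto
  moreover have "(\<Sum>i<length js. js ! i * (rs ! i) k) \<in> Jpow 1"
    using js by (intro Jpow_sum Jpow_mult_right augJ_in_Jpow_1) auto
  ultimately show ?thesis
    using Jpow_add by fastforce
qed

lemma mult_triv_zero:
  assumes "mult_triv (A :: 'c::comm_ring_1 itself) (g :: real ^ 'n \<Rightarrow> (int ^ 'n, 'c) compl)"
  shows "ceq (g 0) cone"
proof -
  have TA0: "TA A (0 :: real ^ 'n)"
    by (rule TA_zero)
  obtain u where u: "ceq (cmul u (g 0)) cone"
    using assms TA0 by (auto simp: mult_triv_def cunit_def)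
  have idem: "ceq (g 0) (cmul (g 0) (g 0))"
    using assms TA0 unfolding mult_triv_def by (metis add_0)
  show ?thesis
    unfolding ceq_def
  proof
    fix k
    have unit: "u k * g 0 k - 1 \<in> Jpow k" and idem: "g 0 k - g 0 k * g 0 k \<in> Jpow k"
      using u idem by (simp_all add: ceq_def cmul_def cone_def cemb_def)
    have "- (g 0 k * (u k * g 0 k - 1)) - u k * (g 0 k - g 0 k * g 0 k) + (u k * g 0 k - 1) \<in> Jpow k"
      using Jpow_add[OF Jpow_diff[OF Jpow_uminus[OF Jpow_mult_left[OF unit]] Jpow_mult_left[OF idem]] unit] .
    then show "g 0 k - cone k \<in> Jpow k"
      by (simp add: cone_def cemb_def algebra_simps)
  qed
qed

lemma mult_triv_scaleR:
  assumes g: "mult_triv A g" and v: "TA A v"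
  shows "ceq (g (real j *\<^sub>R v)) (\<lambda>k. g v k ^ j)"
proof (induction j)
  case 0
  then show ?case
    using mult_triv_zero[OF g] by (simp add: cone_def cemb_def)
next
  case (Suc j)
  have "ceq (g (v + real j *\<^sub>R v)) (cmul (g v) (g (real j *\<^sub>R v)))"
    using g v TA_scaleR[OF v] by (simp add: mult_triv_def)
  moreover have "ceq (cmul (g v) (g (real j *\<^sub>R v))) (cmul (g v) (\<lambda>k. g v k ^ j))"
    by (rule ceq_cmul[OF ceq_refl Suc])
  ultimately show ?case
    by (simp add: cmul_def algebra_simps ceq_trans)
qed

lemma mult_triv_principal_root:
  assumes g: "mult_triv (A :: 'c::comm_ring_1 itself) (g :: real ^ 'n \<Rightarrow> (int ^ 'n, 'c) compl)"
    and v: "TA A v" and m: "real M *\<^sub>R v = ivec m"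
  shows "principal_root M (delta (- m)) (g v)"
proof -
  have "ceq (g (0 + ivec m)) (cmul (cemb (delta (- m))) (g 0))"
    using g TA_zero unfolding mult_triv_def by blast
  also have "ceq \<dots> (cmul (cemb (delta (- m))) cone)"
    by (rule ceq_cmul[OF ceq_refl mult_triv_zero[OF g]])
  finally have "ceq (\<lambda>k. g v k ^ M) (cemb (delta (- m)))"
    using mult_triv_scaleR[OF g v, of M] m
    by (auto simp: cmul_def cone_def cemb_def intro: ceq_trans ceq_sym)
  moreover have "g v k - 1 \<in> Jpow 1" if "k > 0" for k
  proof -
    have "inI (cdiff (g v) cone)"
      using g v by (simp add: mult_triv_def)
    from inI_imp_Jpow_1[OF this that] show ?thesis
      by (simp add: cdiff_def cone_def cemb_def)
  qed
  ultimately show ?thesis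
    by (simp add: principal_root_def ceq_def cemb_def)
qed

lemma mult_triv_if_principal_roots:
  fixes g :: "real ^ 'n \<Rightarrow> (int ^ 'n, 'c::comm_ring_1) compl"
  assumes stalk: "\<And>v. TA A v \<Longrightarrow> cvalid (g v) \<and> cunit (g v) \<and> inI (cdiff (g v) cone)"
    and root: "\<And>v M m. TA A v \<Longrightarrow> M > 0 \<Longrightarrow> real M *\<^sub>R v = ivec m
      \<Longrightarrow> principal_root M (delta (- m)) (g v)"
  shows "mult_triv A g"
  unfolding mult_triv_def
proof (intro conjI allI impI)
  fix v :: "real ^ 'n"
  assume "TA A v"
  then show "cvalid (g v)" "cunit (g v)" "inI (cdiff (g v) cone)"
    using stalk by simp_all
next
  fix v :: "real ^ 'n" and l
  assume v: "TA A v"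
  let ?N = "tord v" and ?m = "ord_point v"
  have Nv: "real ?N *\<^sub>R v = ivec ?m" "?N > 0" "unitA (of_nat ?N :: 'c)"
    using TA_D[OF v] by simp_all
  then have Nvl: "real ?N *\<^sub>R (v + ivec l) = ivec (?m + of_nat ?N * l)"
    by (simp add: scaleR_add_right additive.add[OF additive_ivec] ivec_of_nat_mult)
  have "principal_root ?N (delta (- l) ^ ?N * delta (- ?m)) (cmul (cemb (delta (- l))) (g v))"
    using principal_root_cmul[OF principal_root_delta root[OF v Nv(2,1)]] .
  moreover have "delta (- l) ^ ?N * delta (- ?m) = (delta (- (?m + of_nat ?N * l)) :: (int ^ 'n, 'c) grpring)"
    by (simp add: delta_power delta_mult algebra_simps)
  ultimately show "g (v + ivec l) \<approx> cmul (cemb (delta (- l))) (g v)"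
    using principal_root_unique[OF Nv(3) root[OF TA_intro[OF Nv(2) Nvl Nv(3)] Nv(2) Nvl]] by simp
next
  fix v w :: "real ^ 'n"
  assume v: "TA A v" and w: "TA A w"
  let ?M = "tord v * tord w" and ?m = "of_nat (tord w) * ord_point v + of_nat (tord v) * ord_point w"
  have M: "?M > 0" "unitA (of_nat ?M :: 'c)"
    using TA_D[OF v] TA_D[OF w] unitA_mult by simp_all
  have "real ?M *\<^sub>R v = real (tord w) *\<^sub>R (real (tord v) *\<^sub>R v)"
    by (simp add: mult.commute)
  then have Mv: "real ?M *\<^sub>R v = ivec (of_nat (tord w) * ord_point v)"
    using TA_D(3)[OF v] by (simp add: ivec_of_nat_mult)
  have "real ?M *\<^sub>R w = real (tord v) *\<^sub>R (real (tord w) *\<^sub>R w)"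
    by simp
  then have Mw: "real ?M *\<^sub>R w = ivec (of_nat (tord v) * ord_point w)"
    using TA_D(3)[OF w] by (simp add: ivec_of_nat_mult)
  then have Mvw: "real ?M *\<^sub>R (v + w) = ivec ?m"
    using Mv by (simp add: scaleR_add_right additive.add[OF additive_ivec])
  have "principal_root ?M (delta (- (of_nat (tord w) * ord_point v)) * delta (- (of_nat (tord v) * ord_point w)))
      (cmul (g v) (g w))"
    using principal_root_cmul[OF root[OF v M(1) Mv] root[OF w M(1) Mw]] .
  then show "g (v + w) \<approx> cmul (g v) (g w)"
    using principal_root_unique[OF M(2) root[OF TA_intro[OF M(1) Mvw M(2)] M(1) Mvw]]
    by (simp add: delta_mult)
qed

definition can_triv :: "'c::comm_ring_1 itself \<Rightarrow> real ^ 'n \<Rightarrow> (int ^ 'n, 'c) compl" where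
  "can_triv A v = delta_root (tord v) (ord_point v)"

lemma principal_root_can_triv:
  fixes A :: "'c::comm_ring_1 itself" and v :: "real ^ 'n"
  assumes v: "TA A v" and M: "M > 0" "real M *\<^sub>R v = ivec m"
  shows "principal_root M (delta (- m)) (can_triv A v)"
proof -
  obtain q where q: "M = tord v * q"
    using tord(3)[OF M(1)] M(2) by (auto simp: inL_def)
  have "ivec (of_nat q * ord_point v) = ivec m"
    using TA_D(3)[OF v, symmetric] M(2) q by (simp add: ivec_of_nat_mult mult.commute)
  then have "delta (- ord_point v) ^ q = (delta (- m) :: (int ^ 'n, 'c) grpring)"
    by (auto simp: delta_power dest: ivec_inj)
  moreover have "principal_root (tord v) (delta (- ord_point v)) (can_triv A v)"
    using delta_root(1)[OF TA_D(2,1)[OF v]] by (simp add: can_triv_def)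
  then have "principal_root M (delta (- ord_point v) ^ q) (can_triv A v)"
    unfolding q by (rule principal_root_power)
  ultimately show ?thesis
    by simp
qed

lemma mult_triv_can_triv: "mult_triv A (can_triv A :: real ^ 'n \<Rightarrow> (int ^ 'n, 'c::comm_ring_1) compl)"
  by (rule mult_triv_if_principal_roots)
    (use delta_root(2-4)[OF TA_D(2,1)] principal_root_can_triv in \<open>auto simp: can_triv_def\<close>)

lemma mult_triv_unique:
  fixes g g' :: "real ^ 'n \<Rightarrow> (int ^ 'n, 'c::comm_ring_1) compl"
  assumes "mult_triv A g" "mult_triv A g'" "TA A v"
  shows "ceq (g v) (g' v)"
  using principal_root_unique[OF TA_D(2)[OF assms(3)]]
    mult_triv_principal_root[OF _ assms(3) TA_D(3)[OF assms(3)]] assms(1,2) by blast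

lemma mult_triv_phiR:
  fixes g :: "real ^ 'n \<Rightarrow> (int ^ 'n, 'c::comm_ring_1) compl"
    and g' :: "real ^ 'm \<Rightarrow> (int ^ 'm, 'c) compl"
  assumes f: "Modules.additive f" and g: "mult_triv A g" and g': "mult_triv A g'" and v: "TA A v"
  shows "ceq (g' (phiV f v)) (phiR f (g v))"
proof -
  let ?N = "tord v"
  have Nv: "real ?N *\<^sub>R phiV f v = ivec (f (ord_point v))"
    using TA_D(3)[OF v] by (simp add: phiV_scaleR[symmetric] phiV_ivec[OF f])
  have "principal_root ?N (phiA f (delta (- ord_point v))) (phiR f (g v))"
    by (rule principal_root_phiR[OF f mult_triv_principal_root[OF g v TA_D(3)[OF v]]])
  moreover have "principal_root ?N (delta (- f (ord_point v))) (g' (phiV f v))"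
    by (rule mult_triv_principal_root[OF g' TA_intro[OF TA_D(1)[OF v] Nv TA_D(2)[OF v]] Nv])
  ultimately show ?thesis
    using principal_root_unique[OF TA_D(2)[OF v]] by (simp add: additive.minus[OF f])
qed

lemma mult_triv_mult_of_nat:
  fixes g :: "real ^ 'n \<Rightarrow> (int ^ 'n, 'c::comm_ring_1) compl"
  assumes g: "mult_triv A g" and N: "N > 0" "unitA (of_nat N :: 'c)" and v: "real N *\<^sub>R v = ivec l"
  shows "ceq (phiR (\<lambda>x. of_nat N * x) (g v)) (cemb (delta (- l)))"
proof -
  have f: "Modules.additive (\<lambda>x :: int ^ 'n. of_nat N * x)"
    by standard (simp add: distrib_left)
  have "phiA (\<lambda>x. of_nat N * x) (delta (- l)) = (delta (- l) ^ N :: (int ^ 'n, 'c) grpring)"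
    by (simp add: delta_power)
  with principal_root_phiR[OF f mult_triv_principal_root[OF g TA_intro[OF N(1) v N(2)] v]]
  have "principal_root N (delta (- l) ^ N) (phiR (\<lambda>x. of_nat N * x) (g v))"
    by simp
  then show ?thesis
    by (rule principal_root_unique[OF N(2) _ principal_root_delta])
qed

theorem mainTheorem8:
  fixes A :: "'a::comm_ring_1 itself"
  shows
    \<comment> \<open>existence and uniqueness of the multiplicative trivialization over T^(A)\<close>
    "(\<exists>g :: real ^ 'n \<Rightarrow> (int ^ 'n, 'a) compl. mult_triv A g) \<and>
     (\<forall>(g :: real ^ 'n \<Rightarrow> (int ^ 'n, 'a) compl) g'. mult_triv A g \<longrightarrow> mult_triv A g' \<longrightarrow>
        (\<forall>v. TA A v \<longrightarrow> g v \<approx> g' v)) \<and>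
     \<comment> \<open>compatibility with isogenies of degree invertible in A\<close>
     (\<forall>(f :: int ^ 'n \<Rightarrow> int ^ 'm) (g :: real ^ 'n \<Rightarrow> (int ^ 'n, 'a) compl)
        (g' :: real ^ 'm \<Rightarrow> (int ^ 'm, 'a) compl).
        isogeny f \<longrightarrow> unitA (of_nat (isog_deg f) :: 'a) \<longrightarrow>
        mult_triv A g \<longrightarrow> mult_triv A g' \<longrightarrow>
        (\<forall>v. TA A v \<longrightarrow> g' (phiV f v) \<approx> phiR f (g v))) \<and>
     \<comment> \<open>description via [N]: [N]_Log(1_t) = [N]_Log(\<one>) in the stalk at 0, evaluated at N v\<close>
     (\<forall>(g :: real ^ 'n \<Rightarrow> (int ^ 'n, 'a) compl) (N :: nat) v l.
        mult_triv A g \<longrightarrow> N > 0 \<longrightarrow> unitA (of_nat N :: 'a) \<longrightarrow> real N *\<^sub>R v = ivec l \<longrightarrow>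
        phiR (\<lambda>x. of_nat N * x) (g v) \<approx> cemb (delta (- l)))"
proof (intro conjI allI impI)
  show "\<exists>g :: real ^ 'n \<Rightarrow> (int ^ 'n, 'a) compl. mult_triv A g"
    using mult_triv_can_triv by blast
next
  fix f :: "int ^ 'n \<Rightarrow> int ^ 'm" and v :: "real ^ 'n"
    and g :: "real ^ 'n \<Rightarrow> (int ^ 'n, 'a) compl" and g' :: "real ^ 'm \<Rightarrow> (int ^ 'm, 'a) compl"
  \<comment> \<open>only additivity of the isogeny is needed, not its injectivity or degree\<close>
  assume "isogeny f" "mult_triv A g" "mult_triv A g'" "TA A v"
  then show "g' (phiV f v) \<approx> phiR f (g v)"
    by (intro mult_triv_phiR) (auto simp: isogeny_def Modules.additive_def)
qed (simp_all add: mult_triv_unique mult_triv_mult_of_nat)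

end
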